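(* For every non-negative integer $d$, $$\sum_{a\in A_+(d)}\frac{\chi_t(a)}{a}=(-1)^d\frac{b_d(\chi_t)}{L_d}\quad\text{in } K[t].$$
   Context: $q$ is a power of a prime, $A=\mathbb{F}_q[\theta]$, $K=\mathbb{F}_q(\theta)$, $A_+(d)$ is the set of monic polynomials of degree $d$ in $A$. $t$ is an indeterminate and $\chi_t:A\to A[t]$ is the $\mathbb{F}_q$-algebra morphism with $\theta\mapsto t$. $D_d$ is the product of all monic polynomials of degree $d$ in $A$, $L_d$ is the least common multiple of all polynomials of degree $d$ in $A$, and $D_0=L_0=1$. For $f:A\to A[t]$, $M_d(f)(z):=\sum_{b\in A_+(d)} f(b)\prod_{a\in A_+(d)\setminus\{b\}}(z-a)\in A[t][z]$. The Wagner coefficients are $b_d(\chi_t):=(-1)^d\frac{L_d}{D_d}M_d(\chi_t)(0)\in K[t]$. *)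

theory Defs
  imports "HOL-Computational_Algebra.Polynomial_Factorial" "HOL-Computational_Algebra.Euclidean_Algorithm"
begin

text \<open>F_q is modelled by a finite field type 'a (its cardinality q is a prime power).
  A = F_q[theta] is 'a poly; A[t] is 'a poly poly (outer variable t, coefficients in A);
  A[t][z] is 'a poly poly poly; K = 'a poly fract; K[t] is 'a poly fract poly.\<close>

definition Aplus :: "nat \<Rightarrow> ('a::field) poly set" where
  "Aplus d = {p. lead_coeff p = 1 \<and> degree p = d}"

text \<open>chi_t : A -> A[t], the F_q-algebra morphism with theta |-> t.\<close>
definition chi_t :: "('a::field) poly \<Rightarrow> 'a poly poly" where
  "chi_t a = map_poly (\<lambda>c. [:c:]) a"

definition Dd :: "nat \<Rightarrow> ('a::field) poly" where
  "Dd d = (if d = 0 then 1 else (\<Prod>a\<in>Aplus d. a))"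

definition Ld :: "nat \<Rightarrow> ('a::field_gcd) poly" where
  "Ld d = (if d = 0 then 1 else Lcm {p. p \<noteq> 0 \<and> degree p = d})"

definition Md :: "nat \<Rightarrow> (('a::field) poly \<Rightarrow> 'a poly poly) \<Rightarrow> 'a poly poly poly" where
  "Md d f = (\<Sum>b\<in>Aplus d. smult (f b) (\<Prod>a\<in>Aplus d - {b}. [:- [:a:], 1:]))"

definition to_Kt :: "('a::field) poly poly \<Rightarrow> 'a poly fract poly" where
  "to_Kt p = map_poly to_fract p"

definition wagner_b :: "nat \<Rightarrow> ('a::field_gcd) poly fract poly" where
  "wagner_b d = smult ((-1) ^ d * to_fract (Ld d) / to_fract (Dd d))
                      (to_Kt (poly (Md d chi_t) 0))"

end

theory Submission
  imports Defs
begin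

text \<open>The sum has common denominator \<open>D\<^sub>d = \<Prod>a\<in>A\<^sub>+(d). a\<close>, and its numerator is, up to the
  sign \<open>(-1)\<^bsup>q\<^sup>d - 1\<^esup> = 1\<close>, the value \<open>M\<^sub>d(\<chi>\<^sub>t)(0) = \<Sum>\<^sub>b \<chi>\<^sub>t(b) \<Prod>\<^sub>a\<^sub>\<noteq>\<^sub>b (-a)\<close>.
  Hence \<open>\<Sum>\<^sub>a \<chi>\<^sub>t(a)/a = M\<^sub>d(\<chi>\<^sub>t)(0)/D\<^sub>d\<close>, which is \<open>(-1)\<^sup>d b\<^sub>d(\<chi>\<^sub>t)/L\<^sub>d\<close> by definition of \<open>b\<^sub>d\<close>;
  the only arithmetic input is that \<open>L\<^sub>d \<noteq> 0\<close>, because there are only finitely many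
  polynomials of degree \<open>d\<close> over a finite field.\<close>

lemma Aplus_0: "Aplus 0 = {1 :: 'a::field poly}"
  by (auto simp: Aplus_def elim!: degree_eq_zeroE)

lemma Aplus_Suc:
  "Aplus (Suc d) = (\<lambda>(c, p). pCons c p) ` (UNIV \<times> (Aplus d :: 'a::field poly set))"
proof (intro set_eqI iffI)
  fix q :: "'a poly"
  assume q: "q \<in> Aplus (Suc d)"
  obtain c p where qp: "q = pCons c p" by (cases q)
  with q have "p \<in> Aplus d" by (cases "p = 0") (auto simp: Aplus_def)
  with qp show "q \<in> (\<lambda>(c, p). pCons c p) ` (UNIV \<times> Aplus d)" by auto
next
  fix q :: "'a poly"
  assume "q \<in> (\<lambda>(c, p). pCons c p) ` (UNIV \<times> Aplus d)"
  then obtain c p where "q = pCons c p" "p \<in> Aplus d" by auto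
  moreover from \<open>p \<in> Aplus d\<close> have "p \<noteq> 0" by (auto simp: Aplus_def)
  ultimately show "q \<in> Aplus (Suc d)" by (auto simp: Aplus_def)
qed

lemma finite_Aplus_card_Aplus:
  "finite (Aplus d :: 'a::{field,finite} poly set) \<and> card (Aplus d :: 'a poly set) = card (UNIV :: 'a set) ^ d"
proof (induction d)
  case 0
  then show ?case by (simp add: Aplus_0)
next
  case (Suc d)
  have "inj_on (\<lambda>(c, p). pCons c p) (UNIV \<times> (Aplus d :: 'a poly set))"
    by (auto simp: inj_on_def)
  with Suc show ?case
    by (simp add: Aplus_Suc card_image card_cartesian_product)
qed

lemma finite_Aplus: "finite (Aplus d :: 'a::{field,finite} poly set)"
  using finite_Aplus_card_Aplus by blast

lemma card_Aplus: "card (Aplus d :: 'a::{field,finite} poly set) = card (UNIV :: 'a set) ^ d"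
  using finite_Aplus_card_Aplus by blast

lemma zero_notin_Aplus: "0 \<notin> Aplus d"
  by (simp add: Aplus_def)

lemma Dd_eq_prod_Aplus: "Dd d = (\<Prod>a\<in>Aplus d. a)"
  by (simp add: Dd_def Aplus_0)

lemma finite_nonzero_degree_eq:
  "finite {p :: 'a::{field,finite} poly. p \<noteq> 0 \<and> degree p = d}"
proof (rule finite_subset)
  show "{p :: 'a poly. p \<noteq> 0 \<and> degree p = d} \<subseteq> (\<lambda>(c, m). smult c m) ` (UNIV \<times> Aplus d)"
  proof
    fix p :: "'a poly"
    assume p: "p \<in> {p. p \<noteq> 0 \<and> degree p = d}"
    then have "smult (inverse (lead_coeff p)) p \<in> Aplus d"
      by (auto simp: Aplus_def)
    moreover from p have "p = smult (lead_coeff p) (smult (inverse (lead_coeff p)) p)"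
      by (auto simp: field_simps)
    ultimately show "p \<in> (\<lambda>(c, m). smult c m) ` (UNIV \<times> Aplus d)"
      by (auto intro!: image_eqI[where x = "(lead_coeff p, smult (inverse (lead_coeff p)) p)"])
  qed
qed (simp add: finite_Aplus)

lemma Ld_nonzero: "Ld d \<noteq> (0 :: 'a::{field_gcd,finite} poly)"
  using finite_nonzero_degree_eq[where 'a = 'a] by (simp add: Ld_def Lcm_0_iff)

text \<open>Fermat's little theorem: multiplication by \<open>x \<noteq> 0\<close> permutes the units, so
  \<open>x\<^bsup>q - 1\<^esup>\<close> times their product is their product.\<close>
lemma power_card_finite_field: "(x :: 'a::{field,finite}) ^ card (UNIV :: 'a set) = x"
proof (cases "x = 0")
  case False
  let ?U = "UNIV - {0 :: 'a}"
  have "bij_betw (\<lambda>y. x * y) ?U ?U"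
    using False by (intro bij_betw_byWitness[where f' = "\<lambda>y. y / x"]) auto
  from prod.reindex_bij_betw[OF this, of id]
  have "x ^ card ?U * (\<Prod>y\<in>?U. y) = 1 * (\<Prod>y\<in>?U. y)"
    by (simp add: prod.distrib)
  then have "x ^ card ?U = 1"
    by (subst (asm) mult_cancel_right) simp
  moreover have "card (UNIV :: 'a set) = Suc (card ?U)"
    by (rule card_Suc_Diff1[OF finite_UNIV UNIV_I, symmetric])
  ultimately show ?thesis
    by (simp only: power_Suc mult_1_right)
qed (simp add: power_0_left)

lemma minus_one_power_card_Aplus: "(-1 :: 'a::{field,finite}) ^ card (Aplus d :: 'a poly set) = -1"
proof (induction d)
  case (Suc d)
  have "(-1 :: 'a) ^ card (Aplus (Suc d) :: 'a poly set)
      = ((-1) ^ card (Aplus d :: 'a poly set)) ^ card (UNIV :: 'a set)"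
    by (simp add: card_Aplus power_mult[symmetric] mult.commute)
  with Suc power_card_finite_field show ?case by simp
qed (simp add: Aplus_0)

lemma prod_Aplus_remove_uminus:
  fixes b :: "'a::{field,finite} poly"
  assumes "b \<in> Aplus d"
  shows "(\<Prod>a\<in>Aplus d - {b}. - a) = (\<Prod>a\<in>Aplus d - {b}. a)"
proof -
  have "card (Aplus d :: 'a poly set) = Suc (card (Aplus d - {b}))"
    by (rule card_Suc_Diff1[OF finite_Aplus assms, symmetric])
  then have "(-1 :: 'a) ^ card (Aplus d - {b}) = 1"
    using minus_one_power_card_Aplus[of d] by (metis minus_minus mult_minus1 power_Suc)
  moreover have "(-1 :: 'a poly) ^ n = [:(-1) ^ n:]" for n
    by (metis of_int_1 of_int_minus of_int_poly of_int_power)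
  ultimately have "(-1 :: 'a poly) ^ card (Aplus d - {b}) = 1"
    by (simp add: one_pCons)
  then show ?thesis by (simp add: prod_uminus)
qed

lemma poly_Md_0:
  "poly (Md d f) 0 = (\<Sum>b\<in>Aplus d. smult (\<Prod>a\<in>Aplus d - {b}. - a) (f b))"
  by (simp add: Md_def poly_sum poly_prod prod_to_poly)

lemma poly_Md_chi_t_0:
  "poly (Md d chi_t) 0
     = (\<Sum>b\<in>Aplus d. smult (\<Prod>a\<in>Aplus d - {b}. a) (chi_t b :: 'a::{field,finite} poly poly))"
  by (simp add: poly_Md_0 prod_Aplus_remove_uminus cong: sum.cong)

lemma smult_sum_right: "smult c (\<Sum>b\<in>S. p b) = (\<Sum>b\<in>S. smult c (p b))"
  by (induction S rule: infinite_finite_induct) (simp_all add: smult_add_right)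

lemma sum_smult_inverse_common_denominator:
  fixes f :: "'i \<Rightarrow> 'k::field"
  assumes "finite S" and "\<And>b. b \<in> S \<Longrightarrow> f b \<noteq> 0"
  shows "(\<Sum>b\<in>S. smult (inverse (f b)) (x b))
       = smult (inverse (\<Prod>a\<in>S. f a)) (\<Sum>b\<in>S. smult (\<Prod>a\<in>S - {b}. f a) (x b))"
proof -
  have "inverse (f b) = inverse (\<Prod>a\<in>S. f a) * (\<Prod>a\<in>S - {b}. f a)" if "b \<in> S" for b
  proof -
    have "(\<Prod>a\<in>S. f a) = f b * (\<Prod>a\<in>S - {b}. f a)"
      using assms(1) that by (simp add: prod.remove)
    moreover have "(\<Prod>a\<in>S - {b}. f a) \<noteq> 0"
      using assms by simp
    ultimately show ?thesis by (simp add: field_simps)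
  qed
  then show ?thesis
    by (simp add: smult_sum_right smult_smult cong: sum.cong)
qed

lemma to_Kt_sum: "to_Kt (\<Sum>b\<in>S. p b) = (\<Sum>b\<in>S. to_Kt (p b))"
  by (induction S rule: infinite_finite_induct) (simp_all add: to_Kt_def)

lemma to_Kt_smult: "to_Kt (smult c p) = smult (to_fract c) (to_Kt p)"
  by (simp add: to_Kt_def map_poly_smult)

lemma to_fract_prod: "to_fract (\<Prod>a\<in>S. f a) = (\<Prod>a\<in>S. to_fract (f a))"
  by (induction S rule: infinite_finite_induct) simp_all

theorem theorem4p2p2:
  fixes d :: nat
  shows "(\<Sum>a\<in>(Aplus d :: ('a::{field_gcd,finite}) poly set).
            smult (inverse (to_fract a)) (to_Kt (chi_t a)))
         = smult ((-1) ^ d / to_fract (Ld d)) (wagner_b d :: 'a poly fract poly)"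
proof -
  have scalars: "(-1) ^ d / to_fract (Ld d) * ((-1) ^ d * to_fract (Ld d) / to_fract (Dd d))
      = inverse (to_fract (Dd d) :: 'a poly fract)"
  proof -
    have "(-1 :: 'a poly fract) ^ d * (-1) ^ d = 1"
      by (simp flip: power_add)
    with Ld_nonzero[where 'a = 'a] show ?thesis
      by (simp add: field_simps)
  qed
  have "(\<Sum>a\<in>Aplus d. smult (inverse (to_fract a)) (to_Kt (chi_t (a :: 'a poly))))
      = smult (inverse (\<Prod>a\<in>Aplus d. to_fract a))
          (\<Sum>b\<in>Aplus d. smult (\<Prod>a\<in>Aplus d - {b}. to_fract a) (to_Kt (chi_t b)))"
    by (rule sum_smult_inverse_common_denominator[where S = "Aplus d" and f = to_fract])
      (simp_all add: finite_Aplus, metis zero_notin_Aplus)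
  also have "\<dots> = smult (inverse (to_fract (Dd d))) (to_Kt (poly (Md d chi_t) 0))"
    by (simp add: Dd_eq_prod_Aplus poly_Md_chi_t_0 to_Kt_sum to_Kt_smult to_fract_prod)
  also have "\<dots> = smult ((-1) ^ d / to_fract (Ld d)) (wagner_b d)"
    unfolding wagner_b_def smult_smult scalars ..
  finally show ?thesis .
qed

end
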